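(* For every $a \in \mathbb{N}$ and every integer $b \ge 2$, $R_\mathrm{cyc}(S_a, C_b^\mathrm{mon}) = 1 + (a-1)(b-1)$, where $S_a$ is any star graph of order $a$.
   Context: All graphs are finite, simple and undirected, and a graph of order $n$ has vertex set $\{0,1,\ldots,n-1\}$; $K_n$ is the complete graph on $\{0,\ldots,n-1\}$. A $2$-edge-coloring of $K_n$ assigns each edge a color in $\{1,2\}$. An embedding of $H$ in color $j$ is an injective map $\varphi\colon V(H)\to V(K_n)$ such that every edge $uv$ of $H$ goes to an edge $\{\varphi(u),\varphi(v)\}$ of color $j$; it is increasing up to a cyclic permutation if there exists $t\in V(H)$ such that $(\varphi(t),\ldots,\varphi(|H|-1),\varphi(0),\ldots,\varphi(t-1))$ is increasing. $R_\mathrm{cyc}(H_1,H_2)$ is the smallest $n$ such that every $2$-edge-coloring of $K_n$ admits an embedding of $H_1$ in color $1$ or of $H_2$ in color $2$ that is increasing up to a cyclic permutation. A star graph of order $n$ is a graph on $\{0,\ldots,n-1\}$ in which one vertex (the center, arbitrary) is adjacent to all others and there are no other edges. For $n\ge3$ the monotone cycle $C_n^\mathrm{mon}$ has edges $\{i,i+1\}$ ($0\le i\le n-2$) and $\{0,n-1\}$; by convention $C_2^\mathrm{mon}=K_2$. *)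

theory Defs
  imports Main
begin

(* A graph of order h has vertex set {0..<h}; it is given by its order h and
   its edge set E, a set of 2-element subsets of {0..<h}. *)

definition two_colouring :: "nat \<Rightarrow> (nat set \<Rightarrow> nat) \<Rightarrow> bool" where
  "two_colouring n col \<longleftrightarrow>
     (\<forall>e. e \<subseteq> {0..<n} \<and> card e = 2 \<longrightarrow> col e \<in> {1, 2})"

definition embedding_in_colour ::
  "nat \<Rightarrow> (nat set \<Rightarrow> nat) \<Rightarrow> nat \<Rightarrow> nat \<Rightarrow> nat set set \<Rightarrow> (nat \<Rightarrow> nat) \<Rightarrow> bool" where
  "embedding_in_colour n col j h E phi \<longleftrightarrow>
     inj_on phi {0..<h} \<and> phi ` {0..<h} \<subseteq> {0..<n} \<and>
     (\<forall>e\<in>E. col (phi ` e) = j)"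

definition cyc_increasing :: "nat \<Rightarrow> (nat \<Rightarrow> nat) \<Rightarrow> bool" where
  "cyc_increasing h phi \<longleftrightarrow>
     (\<exists>t<h. sorted_wrt (<) (map phi ([t..<h] @ [0..<t])))"

definition cyc_arrows :: "nat \<Rightarrow> nat \<Rightarrow> nat set set \<Rightarrow> nat \<Rightarrow> nat set set \<Rightarrow> bool" where
  "cyc_arrows n h1 E1 h2 E2 \<longleftrightarrow>
     (\<forall>col. two_colouring n col \<longrightarrow>
        (\<exists>phi. embedding_in_colour n col 1 h1 E1 phi \<and> cyc_increasing h1 phi) \<or>
        (\<exists>phi. embedding_in_colour n col 2 h2 E2 phi \<and> cyc_increasing h2 phi))"

definition R_cyc :: "nat \<Rightarrow> nat set set \<Rightarrow> nat \<Rightarrow> nat set set \<Rightarrow> nat" where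
  "R_cyc h1 E1 h2 E2 = (LEAST n. cyc_arrows n h1 E1 h2 E2)"

definition star_edges :: "nat \<Rightarrow> nat \<Rightarrow> nat set set" where
  "star_edges a c = {{c, v} | v. v < a \<and> v \<noteq> c}"

(* edge set of the monotone cycle C_b^mon: {i,i+1} for i <= b-2, and {0,b-1};
   for b = 2 this is {{0,1}}, i.e. K_2, matching the convention *)
definition mon_cycle_edges :: "nat \<Rightarrow> nat set set" where
  "mon_cycle_edges b = {{i, i + 1} | i. i + 2 \<le> b} \<union> {{0, b - 1}}"

end

theory Submission
  imports Defs
begin

(* Let n = 1 + (a - 1) * (b - 1) and fix a 2-colouring of K_n.  If some vertex x has
   a - 1 neighbours in colour 1, they form a colour-1 star centred at x; listing its vertices in
   increasing order and rotating the list so that x sits at position c gives a cyclically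
   increasing embedding of S_a.  Otherwise every colour-1 degree is below a - 1, so vertex 0 has
   more than (a - 1) * (b - 2) neighbours in colour 2, and among them there is an increasing
   colour-2 path on b - 1 vertices.  This is a Gallai-Roy argument: if there is no increasing
   colour-2 path on k + 1 vertices, the last vertices of those on k vertices span no colour-2
   edge, so there are at most a - 1 of them, and removing them leaves no path on k vertices.
   Putting 0 in front closes the path into a monotone cycle C_b.

   Cut {0..<n}, n \<le> (a - 1) * (b - 1), into b - 1 blocks of a - 1 consecutive
   vertices; colour edges inside a block 1 and edges between blocks 2.  A colour-1 star lies in
   a single block, which is too small, and a cyclically increasing colour-2 copy of C_b, read in
   increasing order, is an increasing path meeting b different blocks. *)

lemma cyc_increasing_iff_rotate:
  "cyc_increasing h phi \<longleftrightarrow> 0 < h \<and> (\<exists>s. sorted_wrt (<) (rotate s (map phi [0..<h])))"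
proof -
  have rotate_upt: "rotate t (map phi [0..<h]) = map phi ([t..<h] @ [0..<t])" if "t < h" for t
    using that by (simp add: rotate_map rotate_drop_take drop_map take_map)
  have "rotate s (map phi [0..<h]) = rotate (s mod h) (map phi [0..<h])" for s
    by (metis length_map length_upt diff_zero rotate_conv_mod)
  then show ?thesis
    unfolding cyc_increasing_def using rotate_upt by (metis mod_less_divisor not_less_zero neq0_conv)
qed

lemma cyc_increasing_nth_rotate:
  assumes "sorted_wrt (<) L" "L \<noteq> []"
  shows "cyc_increasing (length L) ((!) (rotate s L))"
proof -
  have "map ((!) (rotate s L)) [0..<length L] = rotate s L"
    by (metis length_rotate map_nth)
  moreover have "rotate ((length L - 1) * s) (rotate s L) = L"
  proof -
    have "(length L - 1) * s + s = length L * s"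
      using assms(2) by (cases "length L") auto
    then show ?thesis
      by (simp add: rotate_rotate)
  qed
  ultimately show ?thesis
    unfolding cyc_increasing_iff_rotate using assms by (metis length_greater_0_conv)
qed

lemma embedding_in_colour_nth:
  assumes "length L = h" "distinct L" "set L \<subseteq> {0..<n}" "\<forall>e\<in>E. col ((!) L ` e) = j"
  shows "embedding_in_colour n col j h E ((!) L)"
proof -
  have "(!) L ` {0..<h} = set L"
    using assms(1) by (auto simp: in_set_conv_nth)
  then show ?thesis
    using assms inj_on_nth[of L "{0..<h}"] unfolding embedding_in_colour_def by auto
qed

lemma embedding_in_colour_order_le:
  assumes "embedding_in_colour n col j h E phi"
  shows "h \<le> n"
proof -
  have "card (phi ` {0..<h}) = h"
    using assms card_image unfolding embedding_in_colour_def by fastforce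
  moreover have "card (phi ` {0..<h}) \<le> n"
    using assms card_mono[of "{0..<n}"] unfolding embedding_in_colour_def by fastforce
  ultimately show ?thesis by simp
qed

definition colour_nbrs :: "nat \<Rightarrow> (nat set \<Rightarrow> nat) \<Rightarrow> nat \<Rightarrow> nat \<Rightarrow> nat set" where
  "colour_nbrs n col j x = {u\<in>{0..<n}. u \<noteq> x \<and> col {x, u} = j}"

lemma two_colouringD:
  assumes "two_colouring n col" "u < n" "v < n" "u \<noteq> v"
  shows "col {u, v} = 1 \<or> col {u, v} = 2"
proof -
  have "{u, v} \<subseteq> {0..<n}" "card {u, v} = 2"
    using assms(2-4) by auto
  then show ?thesis
    using assms(1) unfolding two_colouring_def by blast
qed

lemma colour_nbrs_1_eq:
  assumes "two_colouring n col" "x < n"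
  shows "colour_nbrs n col 1 x = {u\<in>{0..<n}. u \<noteq> x \<and> col {u, x} \<noteq> 2}"
proof -
  have "col {x, u} = 1 \<longleftrightarrow> col {u, x} \<noteq> 2" if "u < n" "u \<noteq> x" for u
  proof -
    have "{x, u} = {u, x}"
      by blast
    then show ?thesis
      using two_colouringD[OF assms(1) that(1) assms(2) that(2)] by auto
  qed
  then show ?thesis
    unfolding colour_nbrs_def by auto
qed

lemma card_colour_nbrs_1_2:
  assumes "two_colouring n col" "x < n"
  shows "card (colour_nbrs n col 1 x) + card (colour_nbrs n col 2 x) = n - 1"
proof -
  have "colour_nbrs n col 1 x \<union> colour_nbrs n col 2 x = {0..<n} - {x}"
    using two_colouringD[OF assms(1) assms(2)] unfolding colour_nbrs_def by fastforce
  moreover have "colour_nbrs n col 1 x \<inter> colour_nbrs n col 2 x = {}"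
    unfolding colour_nbrs_def by auto
  moreover have "finite (colour_nbrs n col 1 x)" "finite (colour_nbrs n col 2 x)"
    unfolding colour_nbrs_def by simp_all
  ultimately show ?thesis
    using assms(2) card_Un_disjoint[of "colour_nbrs n col 1 x" "colour_nbrs n col 2 x"] by simp
qed

lemma star_embedding_at_vertex:
  assumes "c < a" "x < n" "S \<subseteq> colour_nbrs n col j x" "card S = a - 1"
  shows "\<exists>phi. embedding_in_colour n col j a (star_edges a c) phi \<and> cyc_increasing a phi"
proof -
  have "S \<subseteq> {0..<n}" "x \<notin> S" and nbrs: "\<forall>s\<in>S. col {x, s} = j"
    using assms(3) unfolding colour_nbrs_def by auto
  then have "finite S"
    using finite_subset by blast
  have "card (insert x S) = a"
    using \<open>finite S\<close> \<open>x \<notin> S\<close> assms(1,4) by simp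
  define L where "L = sorted_list_of_set (insert x S)"
  have length_L: "length L = a" and set_L: "set L = insert x S" and sorted: "sorted_wrt (<) L"
    using \<open>finite S\<close> \<open>card (insert x S) = a\<close> unfolding L_def
    by (metis finite_insert length_sorted_list_of_set set_sorted_list_of_set
        sorted_list_of_set.strict_sorted_key_list_of_set)+
  obtain k where "k < a" "L ! k = x"
    using set_L length_L by (metis insertI1 in_set_conv_nth)
  define M where "M = rotate (k + a - c) L"
  have length_M: "length M = a" and set_M: "set M = insert x S" and "distinct M"
    using length_L set_L sorted unfolding M_def by (auto simp: strict_sorted_iff)
  have "(k + a - c + c) mod a = k"
    using \<open>k < a\<close> \<open>c < a\<close> by simp
  then have centre: "M ! c = x"
    using \<open>c < a\<close> length_L \<open>L ! k = x\<close> unfolding M_def by (simp add: nth_rotate)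
  have "col ((!) M ` e) = j" if "e \<in> star_edges a c" for e
  proof -
    obtain v where v: "e = {c, v}" "v < a" "v \<noteq> c"
      using \<open>e \<in> star_edges a c\<close> unfolding star_edges_def by auto
    then have "M ! v \<noteq> x"
      using centre \<open>distinct M\<close> length_M \<open>c < a\<close> by (metis nth_eq_iff_index_eq)
    moreover have "M ! v \<in> insert x S"
      using v(2) length_M set_M nth_mem by metis
    ultimately show ?thesis
      using v(1) centre nbrs by simp
  qed
  then have "embedding_in_colour n col j a (star_edges a c) ((!) M)"
    using length_M \<open>distinct M\<close> set_M assms(2) \<open>S \<subseteq> {0..<n}\<close> by (intro embedding_in_colour_nth) auto
  moreover have "cyc_increasing a ((!) M)"
    using cyc_increasing_nth_rotate[OF sorted] length_L \<open>c < a\<close> unfolding M_def by fastforce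
  ultimately show ?thesis
    by blast
qed

lemma mon_cycle_edge_Suc_mod:
  assumes "i < b"
  shows "{i, Suc i mod b} \<in> mon_cycle_edges b"
proof (cases "Suc i < b")
  case True
  then show ?thesis unfolding mon_cycle_edges_def by auto
next
  case False
  with assms have "i = b - 1" "Suc i = b" by auto
  then show ?thesis unfolding mon_cycle_edges_def by auto
qed

definition increasing_path :: "(nat set \<Rightarrow> nat) \<Rightarrow> nat \<Rightarrow> nat list \<Rightarrow> bool" where
  "increasing_path col j p \<longleftrightarrow> successively (\<lambda>x y. x < y \<and> col {x, y} = j) p"

lemma increasing_path_sorted:
  assumes "increasing_path col j p"
  shows "sorted_wrt (<) p"
proof -
  have "successively (<) p"
    using assms successively_mono unfolding increasing_path_def by fastforce
  then show ?thesis
    by (simp add: successively_conv_sorted_wrt)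
qed

lemma increasing_path_of_mon_cycle_embedding:
  assumes emb: "embedding_in_colour n col j b (mon_cycle_edges b) phi"
    and "cyc_increasing b phi"
  shows "\<exists>L. length L = b \<and> set L \<subseteq> {0..<n} \<and> increasing_path col j L"
proof -
  obtain t where sorted: "sorted_wrt (<) (rotate t (map phi [0..<b]))"
    using \<open>cyc_increasing b phi\<close> unfolding cyc_increasing_iff_rotate by blast
  define L where "L = rotate t (map phi [0..<b])"
  have length_L: "length L = b"
    unfolding L_def by simp
  have L_nth: "L ! i = phi ((t + i) mod b)" if "i < b" for i
    using that unfolding L_def by (simp add: nth_rotate)
  have "L ! i < L ! Suc i \<and> col {L ! i, L ! Suc i} = j" if "Suc i < b" for i
  proof
    show "L ! i < L ! Suc i"
      using sorted that length_L unfolding L_def[symmetric] by (simp add: sorted_wrt_iff_nth_less)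
    have "(t + Suc i) mod b = Suc ((t + i) mod b) mod b"
      by (simp add: mod_Suc_eq)
    then have "{L ! i, L ! Suc i} = phi ` {(t + i) mod b, Suc ((t + i) mod b) mod b}"
      using that L_nth[of i] L_nth[of "Suc i"] by simp
    moreover have "{(t + i) mod b, Suc ((t + i) mod b) mod b} \<in> mon_cycle_edges b"
      using that by (intro mon_cycle_edge_Suc_mod) simp
    ultimately show "col {L ! i, L ! Suc i} = j"
      using emb unfolding embedding_in_colour_def by auto
  qed
  then have "increasing_path col j L"
    unfolding increasing_path_def successively_conv_nth length_L by blast
  moreover have "set L \<subseteq> {0..<n}"
    using emb unfolding L_def embedding_in_colour_def by auto
  ultimately show ?thesis
    using length_L by blast
qed

lemma mon_cycle_embedding_of_increasing_path:
  assumes "0 < b" "length L = b" "set L \<subseteq> {0..<n}"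
    and path: "increasing_path col j L" and closing: "col {hd L, last L} = j"
  shows "\<exists>phi. embedding_in_colour n col j b (mon_cycle_edges b) phi \<and> cyc_increasing b phi"
proof -
  have sorted: "sorted_wrt (<) L"
    using path by (rule increasing_path_sorted)
  have "L \<noteq> []"
    using assms(1,2) by auto
  have "col ((!) L ` e) = j" if "e \<in> mon_cycle_edges b" for e
    using that unfolding mon_cycle_edges_def
  proof safe
    fix i assume "i + 2 \<le> b"
    then show "col ((!) L ` {i, i + 1}) = j"
      using path assms(2) successively_nth unfolding increasing_path_def by fastforce
  next
    show "col ((!) L ` {0, b - 1}) = j"
      using closing \<open>L \<noteq> []\<close> assms(2) by (simp add: hd_conv_nth last_conv_nth)
  qed
  then have "embedding_in_colour n col j b (mon_cycle_edges b) ((!) L)"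
    using assms(2,3) sorted by (intro embedding_in_colour_nth) (auto simp: strict_sorted_iff)
  moreover have "cyc_increasing b ((!) L)"
    using cyc_increasing_nth_rotate[OF sorted \<open>L \<noteq> []\<close>, of 0] assms(2) by simp
  ultimately show ?thesis
    by blast
qed

lemma mon_cycle_embedding_cone_over_path:
  assumes "2 \<le> b" "length p = b - 1" "increasing_path col j p" "set p \<subseteq> {1..<n}"
    and cone: "\<forall>u\<in>set p. col {0, u} = j"
  shows "\<exists>phi. embedding_in_colour n col j b (mon_cycle_edges b) phi \<and> cyc_increasing b phi"
proof (rule mon_cycle_embedding_of_increasing_path)
  have "p \<noteq> []"
    using assms(1,2) by auto
  then have "hd p \<in> set p" "last p \<in> set p"
    by simp_all
  then show "increasing_path col j (0 # p)"
    using assms(3,4) cone unfolding increasing_path_def by (cases p) auto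
  show "col {hd (0 # p), last (0 # p)} = j"
    using cone \<open>last p \<in> set p\<close> \<open>p \<noteq> []\<close> by simp
  show "length (0 # p) = b" "set (0 # p) \<subseteq> {0..<n}"
    using assms(1,2,4) \<open>hd p \<in> set p\<close> by auto
qed (use assms(1) in simp)

lemma card_le_if_spans_no_colour_edge:
  fixes X :: "'a::linorder set"
  assumes "finite X" "M \<subseteq> X"
    and no_edge: "\<forall>u\<in>M. \<forall>v\<in>M. u < v \<longrightarrow> col {u, v} \<noteq> j"
    and deg: "\<forall>v\<in>X. card {u\<in>X. u \<noteq> v \<and> col {u, v} \<noteq> j} < d"
  shows "card M \<le> d"
proof (cases "M = {}")
  case False
  then obtain v where "v \<in> M"
    by blast
  have "M - {v} \<subseteq> {u\<in>X. u \<noteq> v \<and> col {u, v} \<noteq> j}"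
  proof
    fix u assume u: "u \<in> M - {v}"
    have "col {u, v} \<noteq> j"
    proof (cases "u < v")
      case True
      then show ?thesis
        using no_edge u \<open>v \<in> M\<close> by blast
    next
      case False
      then have "v < u"
        using u by auto
      moreover have "{u, v} = {v, u}"
        by blast
      ultimately show ?thesis
        using no_edge u \<open>v \<in> M\<close> by auto
    qed
    then show "u \<in> {u\<in>X. u \<noteq> v \<and> col {u, v} \<noteq> j}"
      using u \<open>M \<subseteq> X\<close> by blast
  qed
  then have "card (M - {v}) \<le> card {u\<in>X. u \<noteq> v \<and> col {u, v} \<noteq> j}"
    using \<open>finite X\<close> by (intro card_mono) auto
  also have "\<dots> < d"
    using deg \<open>v \<in> M\<close> \<open>M \<subseteq> X\<close> by blast
  finally show ?thesis
    using \<open>v \<in> M\<close> \<open>finite X\<close> \<open>M \<subseteq> X\<close> finite_subset by fastforce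
qed simp

lemma increasing_path_exists:
  assumes "finite X"
    and deg: "\<forall>v\<in>X. card {u\<in>X. u \<noteq> v \<and> col {u, v} \<noteq> j} < d"
    and "d * k < card X"
  shows "\<exists>p. length p = Suc k \<and> set p \<subseteq> X \<and> increasing_path col j p"
  using assms
proof (induction k arbitrary: X)
  case 0
  then obtain v where "v \<in> X"
    by fastforce
  then show ?case
    by (intro exI[of _ "[v]"]) (simp add: increasing_path_def)
next
  case (Suc k)
  define M where "M = {v\<in>X. \<exists>p. length p = Suc k \<and> set p \<subseteq> X \<and> increasing_path col j p \<and> last p = v}"
  show ?case
  proof (cases "\<exists>x\<in>M. \<exists>y\<in>M. x < y \<and> col {x, y} = j")
    case True
    then obtain p y where p: "length p = Suc k" "set p \<subseteq> X" "increasing_path col j p"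
      and "y \<in> X" "last p < y" "col {last p, y} = j"
      unfolding M_def by blast
    then have "length (p @ [y]) = Suc (Suc k) \<and> set (p @ [y]) \<subseteq> X \<and> increasing_path col j (p @ [y])"
      unfolding increasing_path_def by (auto simp: successively_append_iff)
    then show ?thesis
      by blast
  next
    case False
    have "M \<subseteq> X"
      unfolding M_def by blast
    then have "card M \<le> d"
      using Suc.prems(1,2) False by (intro card_le_if_spans_no_colour_edge[of X]) auto
    moreover note \<open>M \<subseteq> X\<close>
    ultimately have "d * k < card (X - M)"
      using Suc.prems(1,3) card_Diff_subset[of M X] card_mono[of X M] finite_subset[of M X]
      by simp
    moreover have "\<forall>v\<in>X - M. card {u\<in>X - M. u \<noteq> v \<and> col {u, v} \<noteq> j} < d"
    proof
      fix v assume "v \<in> X - M"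
      have "card {u\<in>X - M. u \<noteq> v \<and> col {u, v} \<noteq> j} \<le> card {u\<in>X. u \<noteq> v \<and> col {u, v} \<noteq> j}"
        using Suc.prems(1) by (intro card_mono) auto
      then show "card {u\<in>X - M. u \<noteq> v \<and> col {u, v} \<noteq> j} < d"
        using Suc.prems(2) \<open>v \<in> X - M\<close> by fastforce
    qed
    ultimately obtain p where p: "length p = Suc k" "set p \<subseteq> X - M" "increasing_path col j p"
      using Suc.IH[of "X - M"] Suc.prems(1) by blast
    then have "last p \<in> set p"
      by (intro last_in_set) auto
    then have "last p \<in> M"
      using p unfolding M_def by auto
    with \<open>last p \<in> set p\<close> p(2) show ?thesis
      by blast
  qed
qed

lemma mon_cycle_embedding_if_colour_1_degrees_lt:
  assumes "2 \<le> b" "two_colouring n col" "d * (b - 1) < n"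
    and deg: "\<forall>x<n. card (colour_nbrs n col 1 x) < d"
  shows "\<exists>phi. embedding_in_colour n col 2 b (mon_cycle_edges b) phi \<and> cyc_increasing b phi"
proof -
  define X where "X = colour_nbrs n col 2 0"
  have "0 < n"
    using assms(3) by linarith
  then have "card (colour_nbrs n col 1 0) + card X = n - 1"
    unfolding X_def using assms(2) by (rule card_colour_nbrs_1_2[rotated])
  moreover have "d * (b - 1) = d * (b - 2) + d"
  proof -
    have "b - 1 = Suc (b - 2)"
      using assms(1) by simp
    then show ?thesis
      by simp
  qed
  ultimately have "d * (b - 2) < card X"
    using deg \<open>0 < n\<close> assms(3) by fastforce
  moreover have "\<forall>v\<in>X. card {u\<in>X. u \<noteq> v \<and> col {u, v} \<noteq> 2} < d"
  proof
    fix v assume "v \<in> X"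
    then have "v < n"
      unfolding X_def colour_nbrs_def by simp
    have "{u\<in>X. u \<noteq> v \<and> col {u, v} \<noteq> 2} \<subseteq> colour_nbrs n col 1 v"
      unfolding colour_nbrs_1_eq[OF assms(2) \<open>v < n\<close>] by (auto simp: X_def colour_nbrs_def)
    then have "card {u\<in>X. u \<noteq> v \<and> col {u, v} \<noteq> 2} \<le> card (colour_nbrs n col 1 v)"
      by (intro card_mono) (simp_all add: colour_nbrs_def)
    also have "\<dots> < d"
      using deg \<open>v \<in> X\<close> unfolding X_def colour_nbrs_def by simp
    finally show "card {u\<in>X. u \<noteq> v \<and> col {u, v} \<noteq> 2} < d" .
  qed
  moreover have "finite X"
    unfolding X_def colour_nbrs_def by simp
  ultimately obtain p where "length p = Suc (b - 2)" "set p \<subseteq> X" "increasing_path col 2 p"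
    using increasing_path_exists[of X col 2 d "b - 2"] by blast
  then show ?thesis
    using assms(1) by (intro mon_cycle_embedding_cone_over_path) (auto simp: X_def colour_nbrs_def)
qed

lemma cyc_arrows_at_bound:
  assumes "2 \<le> b" "c < a"
  shows "cyc_arrows (1 + (a - 1) * (b - 1)) a (star_edges a c) b (mon_cycle_edges b)"
  unfolding cyc_arrows_def
proof (intro allI impI)
  fix col
  define n where "n = 1 + (a - 1) * (b - 1)"
  assume colouring: "two_colouring n col"
  show "(\<exists>phi. embedding_in_colour n col 1 a (star_edges a c) phi \<and> cyc_increasing a phi) \<or>
        (\<exists>phi. embedding_in_colour n col 2 b (mon_cycle_edges b) phi \<and> cyc_increasing b phi)"
  proof (cases "\<exists>x<n. a - 1 \<le> card (colour_nbrs n col 1 x)")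
    case True
    then obtain x S where "x < n" "S \<subseteq> colour_nbrs n col 1 x" "card S = a - 1"
      by (meson obtain_subset_with_card_n)
    then have "\<exists>phi. embedding_in_colour n col 1 a (star_edges a c) phi \<and> cyc_increasing a phi"
      using assms(2) by (intro star_embedding_at_vertex)
    then show ?thesis
      by blast
  next
    case False
    then have "\<exists>phi. embedding_in_colour n col 2 b (mon_cycle_edges b) phi \<and> cyc_increasing b phi"
      using assms(1) colouring
      by (intro mon_cycle_embedding_if_colour_1_degrees_lt[where d = "a - 1"]) (auto simp: n_def)
    then show ?thesis
      by blast
  qed
qed

definition block_colouring :: "nat \<Rightarrow> nat set \<Rightarrow> nat" where
  "block_colouring d e = (if \<exists>x y. e = {x, y} \<and> x div d \<noteq> y div d then 2 else 1)"

lemma block_colouring_doubleton [simp]: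
  "block_colouring d {x, y} = (if x div d = y div d then 1 else 2)"
  unfolding block_colouring_def by (auto simp: doubleton_eq_iff)

lemma two_colouring_block_colouring: "two_colouring n (block_colouring d)"
  unfolding two_colouring_def block_colouring_def by simp

lemma star_embedding_block_colouring_le:
  assumes "0 < d" "c < a" and emb: "embedding_in_colour n (block_colouring d) 1 a (star_edges a c) phi"
  shows "a \<le> d"
proof -
  have same_block: "phi v div d = phi c div d" if "v < a" for v
  proof (cases "v = c")
    case False
    then have "{c, v} \<in> star_edges a c"
      using that unfolding star_edges_def by auto
    then have "block_colouring d {phi c, phi v} = 1"
      using emb unfolding embedding_in_colour_def by force
    then show ?thesis
      by (simp split: if_splits)
  qed simp
  have "inj_on (\<lambda>y. y mod d) (phi ` {0..<a})"
  proof (rule inj_onI)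
    fix y z assume "y \<in> phi ` {0..<a}" "z \<in> phi ` {0..<a}" "y mod d = z mod d"
    moreover have "y div d = z div d"
      using \<open>y \<in> phi ` {0..<a}\<close> \<open>z \<in> phi ` {0..<a}\<close> same_block by auto
    ultimately show "y = z"
      by (metis div_mult_mod_eq)
  qed
  then have "card (phi ` {0..<a}) \<le> card {0..<d}"
    using \<open>0 < d\<close> by (intro card_inj_on_le) auto
  moreover have "card (phi ` {0..<a}) = a"
    using emb card_image unfolding embedding_in_colour_def by fastforce
  ultimately show ?thesis
    by simp
qed

lemma increasing_path_block_colouring_length_le:
  assumes "increasing_path (block_colouring d) 2 L" "set L \<subseteq> {0..<d * m}"
  shows "length L \<le> m"
proof -
  define Q where "Q = map (\<lambda>x. x div d) L"
  have "successively (<) Q"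
    using assms(1) unfolding Q_def increasing_path_def successively_map
    by (rule successively_mono) (auto simp: div_le_mono le_neq_trans split: if_splits)
  then have "distinct Q"
    by (simp add: successively_conv_sorted_wrt strict_sorted_iff)
  moreover have "set Q \<subseteq> {0..<m}"
    using assms(2) unfolding Q_def by (auto simp: less_mult_imp_div_less mult.commute)
  ultimately have "card (set Q) \<le> m"
    using card_mono[of "{0..<m}" "set Q"] by simp
  then have "length Q \<le> m"
    using distinct_card[OF \<open>distinct Q\<close>] by simp
  then show ?thesis
    unfolding Q_def by simp
qed

lemma not_cyc_arrows_below_bound:
  assumes "2 \<le> b" "c < a" "n \<le> (a - 1) * (b - 1)"
  shows "\<not> cyc_arrows n a (star_edges a c) b (mon_cycle_edges b)"
proof
  let ?col = "block_colouring (a - 1)"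
  assume "cyc_arrows n a (star_edges a c) b (mon_cycle_edges b)"
  then consider (star) phi where "embedding_in_colour n ?col 1 a (star_edges a c) phi"
    | (cycle) phi where "embedding_in_colour n ?col 2 b (mon_cycle_edges b) phi" "cyc_increasing b phi"
    unfolding cyc_arrows_def using two_colouring_block_colouring by blast
  then show False
  proof cases
    case star
    \<comment> \<open>For a = 1 the blocks are empty; then n = 0 and nothing embeds at all.\<close>
    then have "a \<le> n"
      by (rule embedding_in_colour_order_le)
    with assms have "0 < a - 1"
      by (cases "a = 1") auto
    then have "a \<le> a - 1"
      using star_embedding_block_colouring_le[OF _ assms(2) star] by blast
    with assms(2) show False
      by simp
  next
    case cycle
    then obtain L where "length L = b" "set L \<subseteq> {0..<n}" and path: "increasing_path ?col 2 L"
      using increasing_path_of_mon_cycle_embedding by blast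
    moreover have "set L \<subseteq> {0..<(a - 1) * (b - 1)}"
      using \<open>set L \<subseteq> {0..<n}\<close> assms(3) by auto
    ultimately have "b \<le> b - 1"
      using increasing_path_block_colouring_length_le[OF path] by simp
    with assms(1) show False
      by simp
  qed
qed

theorem corollary4p19:
  fixes a b c :: nat
  assumes "1 \<le> a" and "2 \<le> b" and "c < a"
  shows "R_cyc a (star_edges a c) b (mon_cycle_edges b) = 1 + (a - 1) * (b - 1)"
  unfolding R_cyc_def
proof (rule Least_equality)
  show "cyc_arrows (1 + (a - 1) * (b - 1)) a (star_edges a c) b (mon_cycle_edges b)"
    using assms(2,3) by (rule cyc_arrows_at_bound)
  show "1 + (a - 1) * (b - 1) \<le> m" if "cyc_arrows m a (star_edges a c) b (mon_cycle_edges b)" for m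
    using not_cyc_arrows_below_bound[OF assms(2,3), of m] that by linarith
qed

end
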